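(* For every $n\ge0$, in $\mathbb{Z}[x,q]$ modulo the ideal generated by $q^2-1$, $$L_n(x)+q\bar L_n(x)\equiv r_n(x,q),\qquad e_n(x)+q\,o_n(x)\equiv p_n(x,q).$$
   Context: $e(n,k)$ (resp. $o(n,k)$) is the number of $k$-element subsets of $\{1,\dots,n\}$ with even (resp. odd) sum, the empty set counting as even; $e_n(x)=\sum_k e(n,k)x^k$, $o_n(x)=\sum_k o(n,k)x^k$. Losanitsch's triangle $(L(n,k))$ is defined by $L(0,k)=[k=0]$, $L(1,k)=[k\le 1]$ for $k\ge0$, $L(n,k)=0$ for $k<0$, and for $n\ge 2$: $L(n,k)=L(n-2,k)+\binom{n-2}{k-1}+L(n-2,k-2)$ (with $\binom{m}{j}=0$ for $j<0$ or $j>m$); $\bar L(n,k)=\binom nk-L(n,k)$; $L_n(x)=\sum_{k=0}^nL(n,k)x^k$, $\bar L_n(x)=\sum_{k=0}^n\bar L(n,k)x^k$. $\begin{bmatrix} n\\ k\end{bmatrix}_q$ is the Gaussian binomial coefficient, $r_n(x,q)=\sum_{k=0}^n\begin{bmatrix} n\\ k\end{bmatrix}_q x^k$ (Rogers–Szegő polynomial) and $p_n(x,q)=\prod_{j=1}^n(1+q^jx)$ ($q$-Newton polynomial). *)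

theory Defs
  imports "HOL-Computational_Algebra.Polynomial"
begin

text \<open>Bivariate integer polynomials Z[x,q] are represented as int poly poly:
  the outer variable is x, the coefficients are polynomials in q.\<close>

definition qvar :: "int poly poly" where
  "qvar = [:[:0, 1:]:]"

definition xvar :: "int poly poly" where
  "xvar = [:0, 1:]"

definition e_cnt :: "nat \<Rightarrow> nat \<Rightarrow> nat" where
  "e_cnt n k = card {S. S \<subseteq> {1..n} \<and> card S = k \<and> even (\<Sum>S)}"

definition o_cnt :: "nat \<Rightarrow> nat \<Rightarrow> nat" where
  "o_cnt n k = card {S. S \<subseteq> {1..n} \<and> card S = k \<and> odd (\<Sum>S)}"

definition e_poly :: "nat \<Rightarrow> int poly poly" where
  "e_poly n = (\<Sum>k\<le>n. of_nat (e_cnt n k) * xvar ^ k)"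

definition o_poly :: "nat \<Rightarrow> int poly poly" where
  "o_poly n = (\<Sum>k\<le>n. of_nat (o_cnt n k) * xvar ^ k)"

text \<open>Losanitsch's triangle; for natural k, the terms with negative index vanish.\<close>
fun Los :: "nat \<Rightarrow> nat \<Rightarrow> nat" where
  "Los 0 k = (if k = 0 then 1 else 0)"
| "Los (Suc 0) k = (if k \<le> 1 then 1 else 0)"
| "Los (Suc (Suc n)) k =
     Los n k + (if k \<ge> 1 then n choose (k - 1) else 0) + (if k \<ge> 2 then Los n (k - 2) else 0)"

definition Losbar :: "nat \<Rightarrow> nat \<Rightarrow> int" where
  "Losbar n k = int (n choose k) - int (Los n k)"

definition L_poly :: "nat \<Rightarrow> int poly poly" where
  "L_poly n = (\<Sum>k\<le>n. of_nat (Los n k) * xvar ^ k)"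

definition Lbar_poly :: "nat \<Rightarrow> int poly poly" where
  "Lbar_poly n = (\<Sum>k\<le>n. of_int (Losbar n k) * xvar ^ k)"

fun gauss_binom :: "nat \<Rightarrow> nat \<Rightarrow> int poly" where
  "gauss_binom n 0 = 1"
| "gauss_binom 0 (Suc k) = 0"
| "gauss_binom (Suc n) (Suc k) = gauss_binom n k + monom 1 (Suc k) * gauss_binom n (Suc k)"

definition rogers_szego :: "nat \<Rightarrow> int poly poly" where
  "rogers_szego n = (\<Sum>k\<le>n. [:gauss_binom n k:] * xvar ^ k)"

definition q_newton :: "nat \<Rightarrow> int poly poly" where
  "q_newton n = (\<Prod>j\<in>{1..n}. 1 + qvar ^ j * xvar)"

end

theory Submission
  imports Defs
begin

text \<open>A polynomial in \<open>\<int>[x, q]\<close> is divisible by \<open>q\<^sup>2 - 1\<close> exactly when it vanishes at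
  \<open>q = 1\<close> and at \<open>q = -1\<close>, so both congruences reduce to identities in \<open>\<int>[x]\<close>. At \<open>q = 1\<close>
  they are the binomial theorem and the count of all \<open>k\<close>-subsets. At \<open>q = -1\<close> the Gaussian
  binomials obey \<open>[n+2, k] = [n, k] + [n, k-2]\<close>, which together with Pascal's rule gives
  \<open>2 L(n, k) = (n choose k) + [n, k]\<close>; and expanding \<open>\<Prod>j (1 + q\<^sup>j x)\<close> over subsets \<open>B\<close>
  gives each \<open>k\<close>-subset the weight \<open>q ^ \<Sum>B\<close>, which at \<open>q = -1\<close> is the parity sign of \<open>\<Sum>B\<close>.\<close>

definition eval_q :: "int \<Rightarrow> int poly poly \<Rightarrow> int poly" where
  "eval_q a P = map_poly (\<lambda>c. poly c a) P"

lemma eval_q_add [simp]: "eval_q a (P + Q) = eval_q a P + eval_q a Q"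
  unfolding eval_q_def by (rule poly_eqI) (simp add: coeff_map_poly)

lemma eval_q_diff [simp]: "eval_q a (P - Q) = eval_q a P - eval_q a Q"
  unfolding eval_q_def by (rule poly_eqI) (simp add: coeff_map_poly)

lemma eval_q_mult [simp]: "eval_q a (P * Q) = eval_q a P * eval_q a Q"
  unfolding eval_q_def by (rule poly_eqI) (simp add: coeff_map_poly coeff_mult poly_sum)

lemma eval_q_0 [simp]: "eval_q a 0 = 0"
  by (simp add: eval_q_def)

lemma eval_q_1 [simp]: "eval_q a 1 = 1"
  by (simp add: eval_q_def)

lemma eval_q_const [simp]: "eval_q a [:c:] = [:poly c a:]"
  by (simp add: eval_q_def map_poly_pCons)

lemma eval_q_smult [simp]: "eval_q a (smult c P) = smult (poly c a) (eval_q a P)"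
  using eval_q_mult[of a "[:c:]" P] by simp

lemma eval_q_sum [simp]: "eval_q a (sum f A) = (\<Sum>x\<in>A. eval_q a (f x))"
  by (induction A rule: infinite_finite_induct) auto

lemma eval_q_power [simp]: "eval_q a (P ^ k) = eval_q a P ^ k"
  by (induction k) auto

lemma eval_q_xvar [simp]: "eval_q a xvar = [:0, 1:]"
  by (simp add: xvar_def eval_q_def map_poly_pCons)

lemma eval_q_qvar [simp]: "eval_q a qvar = [:a:]"
  by (simp add: qvar_def)

lemma square_minus_one_dvd_if_roots:
  fixes c :: "int poly"
  assumes "poly c 1 = 0" and "poly c (-1) = 0"
  shows "[:-1, 0, 1:] dvd c"
proof -
  obtain r where r: "c = [:-1, 1:] * r"
    using assms(1) poly_eq_0_iff_dvd[of c 1] by (auto elim: dvdE)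
  with assms(2) have "poly r (-1) = 0" by simp
  then obtain s where "r = [:1, 1:] * s"
    using poly_eq_0_iff_dvd[of r "-1"] by (auto elim: dvdE)
  with r have "c = [:-1, 0, 1:] * s" by (simp add: algebra_simps)
  then show ?thesis by (rule dvdI)
qed

lemma qvar_square_minus_one_dvd_diff:
  assumes "eval_q 1 P = eval_q 1 Q" and "eval_q (-1) P = eval_q (-1) Q"
  shows "(qvar ^ 2 - 1) dvd (P - Q)"
proof -
  have "[:-1, 0, 1:] dvd coeff (P - Q) i" for i
  proof (rule square_minus_one_dvd_if_roots)
    have "coeff (eval_q a (P - Q)) i = poly (coeff (P - Q) i) a" for a
      by (simp only: eval_q_def coeff_map_poly poly_0)
    then show "poly (coeff (P - Q) i) 1 = 0" and "poly (coeff (P - Q) i) (-1) = 0"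
      using assms by (metis coeff_0 diff_self eval_q_diff)+
  qed
  moreover have "qvar ^ 2 - 1 = [:[:-1, 0, 1:]:]"
    by (simp add: qvar_def power2_eq_square one_pCons)
  ultimately show ?thesis
    by (simp add: const_poly_dvd_iff)
qed

lemma gauss_binom_at_one: "poly (gauss_binom n k) 1 = int (n choose k)"
  by (induction n k rule: gauss_binom.induct) (auto simp: poly_monom)

lemma gauss_binom_at_minus_one_Suc_Suc:
  "poly (gauss_binom (Suc (Suc n)) k) (-1) =
     poly (gauss_binom n k) (-1) + (if k \<ge> 2 then poly (gauss_binom n (k - 2)) (-1) else 0)"
proof (cases k)
  case (Suc j)
  then show ?thesis
    by (cases j) (simp_all add: poly_monom algebra_simps)
qed simp

lemma binomial_Suc_Suc_split:
  "Suc (Suc n) choose k =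
     (n choose k) + (if k \<ge> 1 then 2 * (n choose (k - 1)) else 0)
       + (if k \<ge> 2 then n choose (k - 2) else 0)"
proof (cases k)
  case (Suc j)
  then show ?thesis
    by (cases j) simp_all
qed simp

lemma Los_double_eq:
  "2 * int (Los n k) = int (n choose k) + poly (gauss_binom n k) (-1)"
proof (induction n k rule: Los.induct)
  case (1 k)
  then show ?case
    by (cases k) simp_all
next
  case (2 k)
  then show ?case
    by (cases k; cases "k - 1") (simp_all add: poly_monom)
next
  case (3 n k)
  then show ?case
    by (simp only: Los.simps binomial_Suc_Suc_split gauss_binom_at_minus_one_Suc_Suc)
      (simp split: if_splits)
qed

lemma Los_plus_Losbar_eq_gauss_binom:
  assumes "a = 1 \<or> a = -1"
  shows "int (Los n k) + a * Losbar n k = poly (gauss_binom n k) a"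
  using assms Los_double_eq[of n k] by (auto simp: Losbar_def gauss_binom_at_one)

lemma eval_q_Losanitsch_eq_rogers_szego:
  assumes "a = 1 \<or> a = -1"
  shows "eval_q a (L_poly n + qvar * Lbar_poly n) = eval_q a (rogers_szego n)"
  unfolding L_poly_def Lbar_poly_def rogers_szego_def
  using Los_plus_Losbar_eq_gauss_binom[OF assms, of n, symmetric]
  by (simp add: sum_distrib_left sum.distrib[symmetric] algebra_simps
      of_nat_poly of_int_poly smult_add_left)

lemma prod_one_plus_mult_expand:
  fixes c :: "'b \<Rightarrow> 'a::comm_semiring_1"
  assumes "finite A"
  shows "(\<Prod>j\<in>A. 1 + c j * x) = (\<Sum>B\<in>Pow A. prod c B * x ^ card B)"
proof -
  have "(\<Prod>j\<in>A. 1 + c j * x) = (\<Prod>j\<in>A. c j * x + 1)"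
    by (simp add: add.commute)
  also have "\<dots> = (\<Sum>B\<in>Pow A. (\<Prod>j\<in>B. c j * x) * (\<Prod>j\<in>A - B. 1))"
    by (rule prod_add[OF assms])
  also have "\<dots> = (\<Sum>B\<in>Pow A. prod c B * x ^ card B)"
    by (simp add: prod.distrib)
  finally show ?thesis .
qed

lemma sum_Pow_group_by_card:
  fixes f :: "'b set \<Rightarrow> 'a::comm_semiring_1"
  assumes "finite A"
  shows "(\<Sum>B\<in>Pow A. f B * x ^ card B) = (\<Sum>k\<le>card A. (\<Sum>B | B \<subseteq> A \<and> card B = k. f B) * x ^ k)"
proof -
  have "card ` Pow A \<subseteq> {..card A}"
    using assms by (auto intro: card_mono)
  then have "(\<Sum>B\<in>Pow A. f B * x ^ card B) =
      (\<Sum>k\<le>card A. \<Sum>B | B \<in> Pow A \<and> card B = k. f B * x ^ card B)"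
    using assms by (intro sum.group[symmetric]) auto
  also have "\<dots> = (\<Sum>k\<le>card A. (\<Sum>B | B \<subseteq> A \<and> card B = k. f B) * x ^ k)"
    by (intro sum.cong) (auto simp: sum_distrib_right)
  finally show ?thesis .
qed

lemma q_newton_eq_subset_sum:
  "q_newton n = (\<Sum>k\<le>n. (\<Sum>B | B \<subseteq> {1..n} \<and> card B = k. qvar ^ \<Sum>B) * xvar ^ k)"
proof -
  have "q_newton n = (\<Sum>B\<in>Pow {1..n}. (\<Prod>j\<in>B. qvar ^ j) * xvar ^ card B)"
    unfolding q_newton_def by (rule prod_one_plus_mult_expand) simp
  also have "\<dots> = (\<Sum>B\<in>Pow {1..n}. qvar ^ \<Sum>B * xvar ^ card B)"
    by (simp add: power_sum)
  also have "\<dots> = (\<Sum>k\<le>n. (\<Sum>B | B \<subseteq> {1..n} \<and> card B = k. qvar ^ \<Sum>B) * xvar ^ k)"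
    using sum_Pow_group_by_card[of "{1..n}"] by simp
  finally show ?thesis .
qed

lemma sum_power_subset_sums_eq_counts:
  fixes a :: "'a::comm_ring_1"
  assumes "a ^ 2 = 1"
  shows "(\<Sum>B | B \<subseteq> {1..n} \<and> card B = k. a ^ \<Sum>B) = of_nat (e_cnt n k) + a * of_nat (o_cnt n k)"
proof -
  let ?S = "{B. B \<subseteq> {1..n} \<and> card B = k}"
  have "a ^ m = (if even m then 1 else a)" for m
    using assms by (auto elim!: evenE oddE simp: power_mult)
  then have "(\<Sum>B\<in>?S. a ^ \<Sum>B) = (\<Sum>B\<in>?S. if even (\<Sum>B) then 1 else a)"
    by simp
  also have "\<dots> = (\<Sum>B\<in>?S \<inter> {B. even (\<Sum>B)}. 1) + (\<Sum>B\<in>?S \<inter> - {B. even (\<Sum>B)}. a)"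
    by (rule sum.If_cases) simp
  also have "?S \<inter> {B. even (\<Sum>B)} = {S. S \<subseteq> {1..n} \<and> card S = k \<and> even (\<Sum>S)}"
    by auto
  also have "?S \<inter> - {B. even (\<Sum>B)} = {S. S \<subseteq> {1..n} \<and> card S = k \<and> odd (\<Sum>S)}"
    by auto
  finally show ?thesis
    by (simp add: e_cnt_def o_cnt_def mult.commute)
qed

lemma eval_q_subset_counts_eq_q_newton:
  assumes "a = 1 \<or> a = -1"
  shows "eval_q a (e_poly n + qvar * o_poly n) = eval_q a (q_newton n)"
proof -
  have "a ^ 2 = 1"
    using assms by auto
  have "eval_q a (q_newton n) =
      (\<Sum>k\<le>n. [:\<Sum>B | B \<subseteq> {1..n} \<and> card B = k. a ^ \<Sum>B:] * [:0, 1:] ^ k)"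
    unfolding q_newton_eq_subset_sum by (simp add: poly_const_pow sum_to_poly)
  also have "\<dots> = (\<Sum>k\<le>n. [:int (e_cnt n k) + a * int (o_cnt n k):] * [:0, 1:] ^ k)"
    by (simp only: sum_power_subset_sums_eq_counts[OF \<open>a ^ 2 = 1\<close>])
  also have "\<dots> = eval_q a (e_poly n + qvar * o_poly n)"
    unfolding e_poly_def o_poly_def
    by (simp add: sum_distrib_left sum.distrib[symmetric] algebra_simps of_nat_poly smult_add_left)
  finally show ?thesis ..
qed

theorem corollary4p2:
  fixes n :: nat
  shows "(qvar ^ 2 - 1) dvd (L_poly n + qvar * Lbar_poly n - rogers_szego n)
       \<and> (qvar ^ 2 - 1) dvd (e_poly n + qvar * o_poly n - q_newton n)"
proof
  show "(qvar ^ 2 - 1) dvd (L_poly n + qvar * Lbar_poly n - rogers_szego n)"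
    by (intro qvar_square_minus_one_dvd_diff eval_q_Losanitsch_eq_rogers_szego) simp_all
  show "(qvar ^ 2 - 1) dvd (e_poly n + qvar * o_poly n - q_newton n)"
    by (intro qvar_square_minus_one_dvd_diff eval_q_subset_counts_eq_q_newton) simp_all
qed

end
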